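(* Let $\mathbf M=(\mathbb{X},\mathbb{X}_0,\mathbf{t})$ be a Markov chain with unknown transition kernel $\mathbf{t}$, and let data $\hat X=[\hat x_1,\dots,\hat x_N]^\top$, $\hat X^+=[\hat x_1^+,\dots,\hat x_N^+]^\top$ be given with $\hat x_i^+\sim\mathbf{t}(\cdot\mid X=\hat x_i)$. Let $k_+,k_x:\mathbb{X}\times\mathbb{X}\to\mathbb{R}$ be kernels with $k_+$ universal, let $\hat\mu^N_{k_+|k_x}$ be the empirical conditional mean embedding built from $(k_+,k_x)$ and $(\hat X,\hat X^+)$, and let $$\mathcal{A}^N_\varepsilon:=\left\{\mu\in\mathcal{G}\ :\ \|\mu-\hat\mu^N_{k_+|k_x}\|_{\mathcal{G}}\le\varepsilon\right\}$$ be the ambiguity set, with radius $\varepsilon\ge 0$ chosen such that $\mathbb{P}\big(\mu_{k_+|k_x}(\mathbf{t})\in\mathcal{A}^N_\varepsilon\big)\ge 1-\rho$ for a given confidence $1-\rho\in[0,1]$. If there exists a function $B:\mathbb{X}\to\mathbb{R}_{\ge0}$ with $B\in\mathcal{H}_{k_+}$ satisfying $$\forall x\in\mathbb{X},\ \forall \mu\in\mathcal{A}^N_\varepsilon:\quad \langle B,\mu(x)\rangle_{\mathcal{H}_{k_+}}-B(x)\le c$$ for some constant $c\ge0$, then with probability at least $1-\rho$ the function $B$ satisfies $\mathbb{E}_{\mathbf{t}}[B(X^+)\mid X=x]-B(x)\le c$ for all $x\in\mathbb{X}$.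
   Context: $\mathbb{X}$ is a Polish space with Borel $\sigma$-algebra. A Markov chain $\mathbf M=(\mathbb{X},\mathbb{X}_0,\mathbf{t})$ consists of the state space $\mathbb{X}$, a set of initial states $\mathbb{X}_0\subset\mathbb{X}$ and a probability kernel $\mathbf{t}$; given the current state $x$, the next state is $X^+\sim\mathbf{t}(\cdot\mid X=x)$. The data are i.i.d. draws with $\hat x_i$ uniform on $\mathbb{X}$ and $\hat x_i^+\sim \mathbf{t}(\cdot\mid X=\hat x_i)$. All kernels are positive definite, bounded, with separable RKHSs; $\mathcal{H}_{k}$ denotes the RKHS of kernel $k$ with feature map $\phi$ satisfying $k(x,x')=\langle\phi(x),\phi(x')\rangle$; $\phi_+$ is the feature map of $k_+$. A kernel on a compact metric space is universal if its RKHS is dense in the continuous functions. $\mathcal{G}$ is the vector-valued RKHS of functions $\mathbb{X}\to\mathcal{H}_{k_+}$ with operator-valued kernel $\Gamma(x,x')=k_x(x,x')\,\mathrm{Id}_{\mathcal{H}_{k_+}}$. The conditional mean embedding (CME) of $\mathbf{t}$ is $\mu_{k_+|k_x}(\mathbf{t})(x):=\mathbb{E}_{\mathbf{t}}[\phi_+(X^+)\mid X=x]$, assumed to lie in $\mathcal{G}$; it satisfies $\mathbb{E}_{\mathbf{t}}[f(X^+)\mid X=x]=\langle f,\mu_{k_+|k_x}(\mathbf{t})(x)\rangle_{\mathcal{H}_{k_+}}$ almost surely for $f\in\mathcal{H}_{k_+}$. The empirical CME is $\hat\mu^N_{k_+|k_x}(x):=k_{\hat X}(x)^\top[K_{\hat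 X}+N\lambda I_N]^{-1}\phi_+(\hat X^+)$, where $\lambda\ge 0$ is a regularization constant (the matrix assumed invertible), $K_{\hat X}=[k_x(\hat x_i,\hat x_j)]_{i,j=1}^N$, $k_{\hat X}(x)=[k_x(x,\hat x_i)]_{i=1}^N$, and $\phi_+(\hat X^+)=[\phi_+(\hat x_i^+)]_{i=1}^N$. The probability "at least $1-\rho$" refers to the randomness of the data. *)

theory Defs
  imports "HOL-Probability.Probability"
begin

text \<open>A feature map phi of the kernel k into a Hilbert space 'h such that 'h, with the
  identification f \<mapsto> (\<lambda>x. inner f (phi x)), is the RKHS of k: the reproducing identity
  k x y = inner (phi x) (phi y) holds and the span of the features is dense.\<close>
definition rkhs_feature :: "('x \<Rightarrow> 'x \<Rightarrow> real) \<Rightarrow> ('x \<Rightarrow> 'h::real_inner) \<Rightarrow> bool" where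
  "rkhs_feature k phi \<longleftrightarrow>
     (\<forall>x y. k x y = inner (phi x) (phi y)) \<and> closure (span (range phi)) = UNIV"

definition bounded_kernel :: "('x \<Rightarrow> 'x \<Rightarrow> real) \<Rightarrow> bool" where
  "bounded_kernel k \<longleftrightarrow> (\<exists>C. \<forall>x y. \<bar>k x y\<bar> \<le> C)"

definition universal_kernel :: "('x::topological_space \<Rightarrow> 'x \<Rightarrow> real) \<Rightarrow> ('x \<Rightarrow> 'h::real_inner) \<Rightarrow> bool" where
  "universal_kernel k phi \<longleftrightarrow> rkhs_feature k phi \<and>
     (\<forall>g. continuous_on UNIV g \<longrightarrow>
        (\<forall>e>0. \<exists>f. \<forall>x. \<bar>g x - inner f (phi x)\<bar> < e))"

text \<open>The vector-valued RKHS 'g of functions 'x \<Rightarrow> 'h with operator-valued kernel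
  Gamma(x,x') = kx x x' * Id: evaluation evG, and Gam x h the element Gamma(.,x) h.\<close>
definition vv_rkhs :: "('x \<Rightarrow> 'x \<Rightarrow> real) \<Rightarrow> ('x \<Rightarrow> 'h::real_inner \<Rightarrow> 'g::real_inner)
                        \<Rightarrow> ('g \<Rightarrow> 'x \<Rightarrow> 'h) \<Rightarrow> bool" where
  "vv_rkhs kx Gam evG \<longleftrightarrow>
     (\<forall>g x h. inner (evG g x) h = inner g (Gam x h)) \<and>
     (\<forall>x h x' h'. inner (Gam x h) (Gam x' h') = kx x x' * inner h h') \<and>
     closure (span (range (\<lambda>(x, h). Gam x h))) = UNIV"

definition gram :: "('x \<Rightarrow> 'x \<Rightarrow> real) \<Rightarrow> ('n::finite \<Rightarrow> 'x) \<Rightarrow> real^'n^'n" where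
  "gram kx xs = (\<chi> i j. kx (xs i) (xs j))"

definition reg_gram :: "('x \<Rightarrow> 'x \<Rightarrow> real) \<Rightarrow> real \<Rightarrow> ('n::finite \<Rightarrow> 'x) \<Rightarrow> real^'n^'n" where
  "reg_gram kx lam xs = gram kx xs + (real CARD('n) * lam) *\<^sub>R mat 1"

text \<open>Empirical CME as element of 'g: sum_{i,j} Gamma(., x_i) (W_ij phi+(x_j^+)),
  W = (K_X + N lambda I)^{-1}; its evaluation at x is k_X(x)^T W phi+(X^+).\<close>
definition emp_cme :: "('x \<Rightarrow> 'x \<Rightarrow> real) \<Rightarrow> ('x \<Rightarrow> 'h::real_inner) \<Rightarrow> ('x \<Rightarrow> 'h \<Rightarrow> 'g::real_inner)
                        \<Rightarrow> real \<Rightarrow> ('n::finite \<Rightarrow> 'x) \<Rightarrow> ('n \<Rightarrow> 'x) \<Rightarrow> 'g" where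
  "emp_cme kx phip Gam lam xs xps =
     (let W = matrix_inv (reg_gram kx lam xs)
      in \<Sum>i\<in>UNIV. \<Sum>j\<in>UNIV. Gam (xs i) ((W $ i $ j) *\<^sub>R phip (xps j)))"

definition cme :: "('x \<Rightarrow> 'x measure) \<Rightarrow> ('x \<Rightarrow> 'h::{banach,second_countable_topology}) \<Rightarrow> 'x \<Rightarrow> 'h" where
  "cme t phip x = (\<integral>y. phip y \<partial>(t x))"

definition ambiguity_set :: "'g::real_normed_vector \<Rightarrow> real \<Rightarrow> 'g set" where
  "ambiguity_set muhat eps = {mu. norm (mu - muhat) \<le> eps}"

definition sample_law :: "'x::topological_space measure \<Rightarrow> ('x \<Rightarrow> 'x measure) \<Rightarrow> ('x \<times> 'x) measure" where
  "sample_law nu t = nu \<bind> (\<lambda>x. t x \<bind> (\<lambda>y. return (borel \<Otimes>\<^sub>M borel) (x, y)))"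

end

theory Submission
  imports Defs
begin

text \<open>On the event that the true conditional mean embedding lies in the ambiguity set, the
  hypothesis on B applies to it, and by the reproducing property of the embedding
  E[B(X') | X = x] = \<langle>B, \<mu>(t)(x)\<rangle>. That event has probability at least 1 - \<rho> by the choice
  of \<epsilon>.\<close>

lemma rkhs_feature_norm_bounded:
  assumes "rkhs_feature k phi" and "bounded_kernel k"
  shows "\<exists>C. \<forall>x. norm (phi x) \<le> C"
proof -
  obtain C where C: "\<And>x y. \<bar>k x y\<bar> \<le> C"
    using \<open>bounded_kernel k\<close> unfolding bounded_kernel_def by blast
  have "norm (phi x) \<le> sqrt C" for x
  proof -
    have "(norm (phi x))\<^sup>2 = k x x"
      using \<open>rkhs_feature k phi\<close> unfolding rkhs_feature_def by (simp add: power2_norm_eq_inner)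
    also have "\<dots> \<le> C"
      using C[of x x] by simp
    finally show ?thesis
      by (simp add: real_le_rsqrt)
  qed
  then show ?thesis
    by blast
qed

lemma integrable_prob_kernel_bounded:
  fixes f :: "'a::topological_space \<Rightarrow> 'b::{banach,second_countable_topology}"
  assumes t: "t \<in> borel \<rightarrow>\<^sub>M prob_algebra borel"
    and f: "f \<in> borel_measurable borel" and bnd: "\<And>y. norm (f y) \<le> C"
  shows "integrable (t x) f"
proof -
  have "t x \<in> space (prob_algebra borel)"
    using t by (rule measurable_space) simp
  then have "prob_space (t x)" and sets_tx: "sets (t x) = sets borel"
    by (auto simp: space_prob_algebra)
  then interpret prob_space "t x"
    by simp
  have "f \<in> borel_measurable (t x)"
    using f measurable_cong_sets[OF sets_tx refl] by blast
  then show ?thesis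
    using bnd by (intro integrable_const_bound[where B = C]) auto
qed

lemma integral_inner_cme:
  assumes "integrable (t x) phi"
  shows "(\<integral>y. inner f (phi y) \<partial>t x) = inner f (cme t phi x)"
  using assms by (simp add: cme_def)

text \<open>The event need not be measurable; if it is not, its measure is 0 by convention and
  the empty event will do.\<close>

lemma measurable_event_of_measure_ge:
  assumes "measure M {w \<in> space M. P w} \<ge> r"
  shows "\<exists>E\<in>sets M. measure M E \<ge> r \<and> (\<forall>w\<in>E. P w)"
proof (cases "{w \<in> space M. P w} \<in> sets M")
  case True
  then show ?thesis
    using assms by blast
next
  case False
  then have "r \<le> 0"
    using assms by (simp add: measure_notin_sets)
  then show ?thesis
    by (intro bexI[of _ "{}"]) auto
qed

theorem theorem1:
  fixes M :: "'w measure"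
    and nu :: "'x::polish_space measure"
    and t :: "'x \<Rightarrow> 'x measure"
    and xs xps :: "'w \<Rightarrow> 'n::finite \<Rightarrow> 'x"
    and kp kx :: "'x \<Rightarrow> 'x \<Rightarrow> real"
    and phip :: "'x \<Rightarrow> 'h::{real_inner,banach,second_countable_topology}"
    and phix :: "'x \<Rightarrow> 'k::{real_inner,banach,second_countable_topology}"
    and Gam :: "'x \<Rightarrow> 'h \<Rightarrow> 'g::{real_inner,banach}"
    and evG :: "'g \<Rightarrow> 'x \<Rightarrow> 'h"
    and mu_t :: 'g
    and lam eps rho :: real
  assumes prob: "prob_space M"
    and nu_prob: "prob_space nu" and nu_sets: "sets nu = sets borel"
    and t_kernel: "t \<in> borel \<rightarrow>\<^sub>M prob_algebra borel"
    and data_meas: "\<And>i. (\<lambda>w. (xs w i, xps w i)) \<in> M \<rightarrow>\<^sub>M (borel \<Otimes>\<^sub>M borel)"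
    and data_indep: "prob_space.indep_vars M (\<lambda>_. borel \<Otimes>\<^sub>M borel) (\<lambda>i w. (xs w i, xps w i)) UNIV"
    and data_law: "\<And>i. distr M (borel \<Otimes>\<^sub>M borel) (\<lambda>w. (xs w i, xps w i)) = sample_law nu t"
    and kp_feat: "rkhs_feature kp phip" and kp_bdd: "bounded_kernel kp"
    and kp_univ: "universal_kernel kp phip"
    and phip_meas: "phip \<in> borel_measurable borel"
    and kx_feat: "rkhs_feature kx phix" and kx_bdd: "bounded_kernel kx"
    and G: "vv_rkhs kx Gam evG"
    and mu_t_cme: "\<forall>x. evG mu_t x = cme t phip x"
    and lam: "lam \<ge> 0"
    and inv: "\<forall>w\<in>space M. invertible (reg_gram kx lam (xs w))"
    and eps: "eps \<ge> 0"
    and rho: "0 \<le> rho" "rho \<le> 1"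
    and conf: "measure M {w \<in> space M.
                 mu_t \<in> ambiguity_set (emp_cme kx phip Gam lam (xs w) (xps w)) eps} \<ge> 1 - rho"
  shows "\<exists>E\<in>sets M. measure M E \<ge> 1 - rho \<and>
           (\<forall>w\<in>E. \<forall>(B::'h) (c::real).
              ((\<forall>x. inner B (phip x) \<ge> 0) \<and> c \<ge> 0 \<and>
               (\<forall>x. \<forall>mu\<in>ambiguity_set (emp_cme kx phip Gam lam (xs w) (xps w)) eps.
                    inner B (evG mu x) - inner B (phip x) \<le> c))
              \<longrightarrow> (\<forall>x. (\<integral>y. inner B (phip y) \<partial>(t x)) - inner B (phip x) \<le> c))"
proof -
  obtain C where "\<And>x. norm (phip x) \<le> C"
    using rkhs_feature_norm_bounded[OF kp_feat kp_bdd] by blast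
  then have expectation: "(\<integral>y. inner B (phip y) \<partial>t x) = inner B (evG mu_t x)" for B x
    using integral_inner_cme integrable_prob_kernel_bounded[OF t_kernel phip_meas] mu_t_cme
    by metis
  obtain E where "E \<in> sets M" "measure M E \<ge> 1 - rho"
    and "\<forall>w\<in>E. mu_t \<in> ambiguity_set (emp_cme kx phip Gam lam (xs w) (xps w)) eps"
    using measurable_event_of_measure_ge[OF conf] by blast
  then show ?thesis
    by (intro bexI[of _ E]) (auto simp: expectation)
qed

end
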